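(* Suppose $|\mathit{Obs}|>1$ and $m\ge1$. Then, over the class of all $m$-agent models, CTL*KΔ$_m$ is strictly more expressive than CTL*K$_m$: every CTL*K$_m$ formula is equivalent to some CTL*KΔ$_m$ formula, but there is a CTL*KΔ$_m$ formula that is not equivalent to any CTL*K$_m$ formula. Here two formulas $\varphi,\varphi'$ are equivalent if for every $m$-agent model $M$, $M\models\varphi$ iff $M\models\varphi'$.
   Context: Fix a countably infinite set $\mathit{AP}$ of atomic propositions, a finite nonempty set $\mathit{Obs}$ of observations, and a finite set of agents $\mathit{Ag}=\{a_1,\dots,a_m\}$. For a word $w$ we write $w_i$ for its letter at position $i$ (positions start at $0$), $w_{\le i}$ for its prefix ending at position $i$, $|w|$ for its length (finite words) and $\mathit{last}(w)$ for its last letter; $w\preceq w'$ means $w$ is a prefix of $w'$. Syntax of CTL*KΔ$_m$: history formulas $\varphi::=p\mid\neg\varphi\mid\varphi\wedge\varphi\mid\mathbf A\psi\mid\mathbf K_a\varphi\mid\Delta^{o}_a\varphi$ and path formulas $\psi::=\varphi\mid\neg\psi\mid\psi\wedge\psi\mid\mathbf X\psi\mid\psi\,\mathbf U\,\psi$, with $p\in\mathit{AP}$, $a\in\mathit{Ag}$, $o\in\mathit{Obs}$; formulas are history formulas. CTL*K$_m$ is the fragment of formulas containing no operator $\Delta^o_a$. A multiagent ($m$-agent) model is $M=(\mathit{AP}_f,S,T,V,\{\sim_o\}_{o\in\mathit{Obs}},s_\iota,\vec o_\iota)$ where $\mathit{AP}_f\subseteq\mathit{AP}$ is finite, $S$ is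 a finite set of states, $T\subseteq S\times S$ is left-total, $V:S\to2^{\mathit{AP}_f}$, each $\sim_o$ is an equivalence relation on $S$, $s_\iota\in S$, and $\vec o_\iota=(\vec o_{\iota,a})_{a\in\mathit{Ag}}\in\mathit{Obs}^{\mathit{Ag}}$ gives each agent an initial observation. Paths are infinite sequences of states $s_0s_1\dots$ with $s_iTs_{i+1}$ (starting anywhere); histories are finite nonempty prefixes of paths. An observation record is a finite word over $\mathit{Obs}\times\mathbb N$; $r_{=n}$ is the subword of $r$ consisting of the pairs with second component $n$. A record tuple is $\vec r=(\vec r_a)_{a\in\mathit{Ag}}$; $\vec r\cdot(o,n)_a$ is $\vec r$ with $\vec r_a$ replaced by $\vec r_a\cdot(o,n)$; $\vec\epsilon$ is the tuple of empty records. For agent $a$: $\mathit{ol}_a(\vec r,0)=\vec o_{\iota,a}\cdot o_1\cdots o_k$ if $(\vec r_a)_{=0}=(o_1,0)\cdots(o_k,0)$, and $\mathit{ol}_a(\vec r,n+1)=\mathit{last}(\mathit{ol}_a(\vec r,n))\cdot o_1\cdots o_k$ if $(\vec r_a)_{=n+1}=(o_1,n+1)\cdots(o_k,n+1)$. $h\approx^{\vec r}_a h'$ iff $|h|=|h'|$ and for all $i<|h|$ and all $o$ in $\mathit{ol}_a(\vec r,i)$, $h_i\sim_o h'_i$. Natural semantics: $h,\vec r\models p$ iff $p\in V(\mathit{last}(h))$; negation and conjunction as usual; $h,\vec r\models\mathbf A\psi$ iff for all paths $\pi$ with $h\preceq\pi$, $\pi,|h|-1,\vec r\models\psi$; $h,\vec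 r\models\mathbf K_a\varphi$ iff $h',\vec r\models\varphi$ for all histories $h'\approx^{\vec r}_a h$; $h,\vec r\models\Delta^o_a\varphi$ iff $h,\vec r\cdot(o,|h|-1)_a\models\varphi$; $\pi,n,\vec r\models\varphi$ iff $\pi_{\le n},\vec r\models\varphi$; negation and conjunction as usual; $\pi,n,\vec r\models\mathbf X\psi$ iff $\pi,n+1,\vec r\models\psi$; $\pi,n,\vec r\models\psi_1\mathbf U\psi_2$ iff there is $m'\ge n$ with $\pi,m',\vec r\models\psi_2$ and $\pi,j,\vec r\models\psi_1$ for all $n\le j<m'$. $M\models\varphi$ iff $s_\iota,\vec\epsilon\models\varphi$ ($s_\iota$ viewed as a one-state history). *)

theory Defs
  imports Main
begin

(* Agents: a type variable 'ag (class finite, automatically nonempty: m >= 1).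
   States of models are drawn from nat (every finite model is isomorphic to one of these). *)

datatype ('ag, 'o) hform =
    Prop nat
  | HNot "('ag, 'o) hform"
  | HAnd "('ag, 'o) hform" "('ag, 'o) hform"
  | Aall "('ag, 'o) pform"
  | Know 'ag "('ag, 'o) hform"
  | Delta 'o 'ag "('ag, 'o) hform"
and ('ag, 'o) pform =
    PH "('ag, 'o) hform"
  | PNot "('ag, 'o) pform"
  | PAnd "('ag, 'o) pform" "('ag, 'o) pform"
  | Next "('ag, 'o) pform"
  | Until "('ag, 'o) pform" "('ag, 'o) pform"

record ('ag, 'o) model =
  APf :: "nat set"
  St :: "nat set"
  Tr :: "(nat \<times> nat) set"
  Val :: "nat \<Rightarrow> nat set"
  Sim :: "'o \<Rightarrow> (nat \<times> nat) set"
  sinit :: nat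
  oinit :: "'ag \<Rightarrow> 'o"

definition wf_model :: "('ag, 'o) model \<Rightarrow> bool" where
  "wf_model M \<longleftrightarrow>
     finite (APf M) \<and> finite (St M) \<and> Tr M \<subseteq> St M \<times> St M \<and>
     (\<forall>s\<in>St M. \<exists>t. (s, t) \<in> Tr M) \<and>
     (\<forall>s\<in>St M. Val M s \<subseteq> APf M) \<and>
     (\<forall>ob. equiv (St M) (Sim M ob)) \<and> sinit M \<in> St M"

definition is_path :: "('ag, 'o) model \<Rightarrow> (nat \<Rightarrow> nat) \<Rightarrow> bool" where
  "is_path M \<pi> \<longleftrightarrow> (\<forall>i. \<pi> i \<in> St M \<and> (\<pi> i, \<pi> (Suc i)) \<in> Tr M)"

definition is_hist :: "('ag, 'o) model \<Rightarrow> nat list \<Rightarrow> bool" where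
  "is_hist M h \<longleftrightarrow> h \<noteq> [] \<and> (\<exists>\<pi>. is_path M \<pi> \<and> (\<forall>i<length h. h ! i = \<pi> i))"

definition pprefix :: "(nat \<Rightarrow> nat) \<Rightarrow> nat \<Rightarrow> nat list" where
  "pprefix \<pi> n = map \<pi> [0..<Suc n]"

type_synonym ('ag, 'o) records = "'ag \<Rightarrow> ('o \<times> nat) list"

fun ol :: "('ag, 'o) model \<Rightarrow> ('ag, 'o) records \<Rightarrow> 'ag \<Rightarrow> nat \<Rightarrow> 'o list" where
  "ol M r a 0 = oinit M a # map fst (filter (\<lambda>p. snd p = 0) (r a))"
| "ol M r a (Suc n) = last (ol M r a n) # map fst (filter (\<lambda>p. snd p = Suc n) (r a))"

definition indist :: "('ag, 'o) model \<Rightarrow> ('ag, 'o) records \<Rightarrow> 'ag \<Rightarrow> nat list \<Rightarrow> nat list \<Rightarrow> bool" where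
  "indist M r a h h' \<longleftrightarrow> length h = length h' \<and>
     (\<forall>i<length h. \<forall>ob\<in>set (ol M r a i). (h ! i, h' ! i) \<in> Sim M ob)"

primrec hsat :: "('ag, 'o) model \<Rightarrow> nat list \<Rightarrow> ('ag, 'o) records \<Rightarrow> ('ag, 'o) hform \<Rightarrow> bool"
and psat :: "('ag, 'o) model \<Rightarrow> (nat \<Rightarrow> nat) \<Rightarrow> nat \<Rightarrow> ('ag, 'o) records \<Rightarrow> ('ag, 'o) pform \<Rightarrow> bool"
where
  "hsat M h r (Prop p) = (p \<in> Val M (last h))"
| "hsat M h r (HNot \<phi>) = (\<not> hsat M h r \<phi>)"
| "hsat M h r (HAnd \<phi>1 \<phi>2) = (hsat M h r \<phi>1 \<and> hsat M h r \<phi>2)"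
| "hsat M h r (Aall \<psi>) =
     (\<forall>\<pi>. is_path M \<pi> \<and> (\<forall>i<length h. h ! i = \<pi> i) \<longrightarrow> psat M \<pi> (length h - 1) r \<psi>)"
| "hsat M h r (Know a \<phi>) = (\<forall>h'. is_hist M h' \<and> indist M r a h' h \<longrightarrow> hsat M h' r \<phi>)"
| "hsat M h r (Delta ob a \<phi>) = hsat M h (r(a := r a @ [(ob, length h - 1)])) \<phi>"
| "psat M \<pi> n r (PH \<phi>) = hsat M (pprefix \<pi> n) r \<phi>"
| "psat M \<pi> n r (PNot \<psi>) = (\<not> psat M \<pi> n r \<psi>)"
| "psat M \<pi> n r (PAnd \<psi>1 \<psi>2) = (psat M \<pi> n r \<psi>1 \<and> psat M \<pi> n r \<psi>2)"
| "psat M \<pi> n r (Next \<psi>) = psat M \<pi> (Suc n) r \<psi>"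
| "psat M \<pi> n r (Until \<psi>1 \<psi>2) =
     (\<exists>m'\<ge>n. psat M \<pi> m' r \<psi>2 \<and> (\<forall>j. n \<le> j \<and> j < m' \<longrightarrow> psat M \<pi> j r \<psi>1))"

definition model_sat :: "('ag, 'o) model \<Rightarrow> ('ag, 'o) hform \<Rightarrow> bool" where
  "model_sat M \<phi> \<longleftrightarrow> hsat M [sinit M] (\<lambda>_. []) \<phi>"

(* CTL*K_m fragment: no Delta operator *)
primrec noDelta :: "('ag, 'o) hform \<Rightarrow> bool"
and noDeltaP :: "('ag, 'o) pform \<Rightarrow> bool" where
  "noDelta (Prop p) = True"
| "noDelta (HNot \<phi>) = noDelta \<phi>"
| "noDelta (HAnd \<phi>1 \<phi>2) = (noDelta \<phi>1 \<and> noDelta \<phi>2)"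
| "noDelta (Aall \<psi>) = noDeltaP \<psi>"
| "noDelta (Know a \<phi>) = noDelta \<phi>"
| "noDelta (Delta ob a \<phi>) = False"
| "noDeltaP (PH \<phi>) = noDelta \<phi>"
| "noDeltaP (PNot \<psi>) = noDeltaP \<psi>"
| "noDeltaP (PAnd \<psi>1 \<psi>2) = (noDeltaP \<psi>1 \<and> noDeltaP \<psi>2)"
| "noDeltaP (Next \<psi>) = noDeltaP \<psi>"
| "noDeltaP (Until \<psi>1 \<psi>2) = (noDeltaP \<psi>1 \<and> noDeltaP \<psi>2)"

definition fequiv :: "('ag::finite, 'o::finite) hform \<Rightarrow> ('ag, 'o) hform \<Rightarrow> bool" where
  "fequiv \<phi> \<phi>' \<longleftrightarrow> (\<forall>M :: ('ag, 'o) model. wf_model M \<longrightarrow> (model_sat M \<phi> \<longleftrightarrow> model_sat M \<phi>'))"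

end

theory Submission
  imports Defs
begin

text \<open>For strictness, note that
  without \<open>\<Delta>\<close> the records stay empty, so each agent only ever uses its initial observation:
  a \<open>\<Delta>\<close>-free formula cannot see how the models treat the other observations. A two-state
  model in which a second observation is either blind or perfectly discerning therefore
  separates \<open>\<Delta>\<^sub>a K\<^sub>a \<not>p\<close> from every \<open>\<Delta>\<close>-free formula.\<close>

lemma ol_no_records: "ol M (\<lambda>_. []) a i = [oinit M a]"
  by (induction i) auto

lemma is_path_Sim_update [simp]: "is_path (M\<lparr>Sim := S\<rparr>) = is_path M"
  by (simp add: is_path_def fun_eq_iff)

lemma is_hist_Sim_update [simp]: "is_hist (M\<lparr>Sim := S\<rparr>) = is_hist M"
  by (simp add: is_hist_def fun_eq_iff)

lemma indist_no_records_Sim_update: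
  assumes "\<And>a. S (oinit M a) = Sim M (oinit M a)"
  shows "indist (M\<lparr>Sim := S\<rparr>) (\<lambda>_. []) a = indist M (\<lambda>_. []) a"
  using assms ol_no_records[of "M\<lparr>Sim := S\<rparr>"] by (simp add: indist_def ol_no_records fun_eq_iff)

lemma sat_noDelta_Sim_update:
  fixes M :: "('ag, 'o) model"
  assumes "\<And>a. S (oinit M a) = Sim M (oinit M a)"
  shows "noDelta \<phi> \<Longrightarrow> hsat (M\<lparr>Sim := S\<rparr>) h (\<lambda>_. []) \<phi> = hsat M h (\<lambda>_. []) \<phi>"
    and "noDeltaP \<psi> \<Longrightarrow> psat (M\<lparr>Sim := S\<rparr>) \<pi> n (\<lambda>_. []) \<psi> = psat M \<pi> n (\<lambda>_. []) \<psi>"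
proof (induction \<phi> and \<psi> arbitrary: h and \<pi> n)
  case (Know a \<phi>)
  then show ?case using indist_no_records_Sim_update[OF assms] by simp
qed auto

lemma model_sat_noDelta_Sim_update:
  assumes "\<And>a. S (oinit M a) = Sim M (oinit M a)" and "noDelta \<phi>"
  shows "model_sat (M\<lparr>Sim := S\<rparr>) \<phi> = model_sat M \<phi>"
  using sat_noDelta_Sim_update(1)[OF assms] by (simp add: model_sat_def)

definition two_state_model :: "('o \<Rightarrow> (nat \<times> nat) set) \<Rightarrow> 'o \<Rightarrow> ('ag, 'o) model" where
  "two_state_model S ob\<^sub>0 = \<lparr>APf = {0}, St = {0, 1}, Tr = {(0, 0), (1, 1)},
     Val = (\<lambda>s. if s = 1 then {0} else {}), Sim = S, sinit = 0, oinit = (\<lambda>_. ob\<^sub>0)\<rparr>"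

lemma wf_two_state_model:
  assumes "\<And>ob. equiv {0, 1} (S ob)"
  shows "wf_model (two_state_model S ob\<^sub>0)"
  using assms by (simp add: wf_model_def two_state_model_def)

lemma is_hist_two_state_model_singleton:
  "is_hist (two_state_model S ob\<^sub>0) [s] \<longleftrightarrow> s \<in> {0, 1}"
proof
  assume "s \<in> {0, 1}"
  then have "is_path (two_state_model S ob\<^sub>0) (\<lambda>_. s)"
    by (auto simp: is_path_def two_state_model_def)
  then show "is_hist (two_state_model S ob\<^sub>0) [s]"
    unfolding is_hist_def by auto
qed (auto simp: is_hist_def is_path_def two_state_model_def)

lemma model_sat_two_state_model_Delta_Know:
  fixes S :: "'o \<Rightarrow> (nat \<times> nat) set"
  shows "model_sat (two_state_model S ob\<^sub>0) (Delta ob a (Know a (HNot (Prop 0))))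
     \<longleftrightarrow> (1, 0) \<notin> S ob\<^sub>0 \<inter> S ob"
proof -
  let ?M = "two_state_model S ob\<^sub>0 :: ('ag, 'o) model"
  let ?r = "(\<lambda>_. [])(a := [(ob, 0)])"
  have "ol ?M ?r a 0 = [ob\<^sub>0, ob]"
    by (simp add: two_state_model_def)
  then have indist_iff: "indist ?M ?r a h' [0] \<longleftrightarrow> (\<exists>s. h' = [s] \<and> (s, 0) \<in> S ob\<^sub>0 \<inter> S ob)" for h'
    by (cases h') (auto simp: indist_def two_state_model_def)
  have init: "sinit ?M = 0" and val: "0 \<in> Val ?M s \<longleftrightarrow> s = 1" for s
    by (simp_all add: two_state_model_def)
  have "model_sat ?M (Delta ob a (Know a (HNot (Prop 0))))
      \<longleftrightarrow> (\<forall>s. s \<in> {0, 1} \<and> (s, 0) \<in> S ob\<^sub>0 \<inter> S ob \<longrightarrow> s \<noteq> 1)"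
    by (auto simp: model_sat_def init val indist_iff is_hist_two_state_model_singleton;
        force simp: is_hist_two_state_model_singleton)
  then show ?thesis
    by auto
qed

theorem mainTheorem11:
  assumes "card (UNIV :: 'o::finite set) > 1"
  shows "(\<forall>\<phi> :: ('ag::finite, 'o) hform. noDelta \<phi> \<longrightarrow> (\<exists>\<phi>'. fequiv \<phi> \<phi>')) \<and>
         (\<exists>\<phi> :: ('ag, 'o) hform. \<forall>\<phi>'. noDelta \<phi>' \<longrightarrow> \<not> fequiv \<phi> \<phi>')"
proof
  show "\<forall>\<phi> :: ('ag, 'o) hform. noDelta \<phi> \<longrightarrow> (\<exists>\<phi>'. fequiv \<phi> \<phi>')"
    by (auto simp: fequiv_def)
next
  obtain ob\<^sub>0 ob\<^sub>1 :: 'o where "ob\<^sub>0 \<noteq> ob\<^sub>1"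
    using assms card_le_Suc0_iff_eq[of "UNIV :: 'o set"] by force
  define blind where "blind = (\<lambda>_ :: 'o. {0 :: nat, 1} \<times> {0 :: nat, 1})"
  define sharp where "sharp = (\<lambda>ob :: 'o. if ob = ob\<^sub>0 then {0 :: nat, 1} \<times> {0 :: nat, 1} else Id_on {0, 1})"
  define M :: "('ag, 'o) model" where "M = two_state_model blind ob\<^sub>0"
  define \<phi> :: "('ag, 'o) hform" where "\<phi> = Delta ob\<^sub>1 undefined (Know undefined (HNot (Prop 0)))"
  have equiv: "equiv {0, 1} (blind ob)" "equiv {0, 1} (sharp ob)" for ob
    by (auto simp: blind_def sharp_def equiv_def refl_on_def sym_def trans_def)
  have "two_state_model sharp ob\<^sub>0 = M\<lparr>Sim := sharp\<rparr>"
    by (simp add: M_def two_state_model_def)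
  moreover have "wf_model M" "wf_model (two_state_model sharp ob\<^sub>0 :: ('ag, 'o) model)"
    using equiv by (simp_all add: M_def wf_two_state_model)
  moreover have "\<not> model_sat M \<phi>" "model_sat (two_state_model sharp ob\<^sub>0) \<phi>"
    using \<open>ob\<^sub>0 \<noteq> ob\<^sub>1\<close>
    by (auto simp: M_def \<phi>_def model_sat_two_state_model_Delta_Know blind_def sharp_def Id_on_def)
  moreover have "\<And>a. sharp (oinit M a) = Sim M (oinit M a)"
    by (simp add: M_def two_state_model_def blind_def sharp_def)
  ultimately show "\<exists>\<phi> :: ('ag, 'o) hform. \<forall>\<phi>'. noDelta \<phi>' \<longrightarrow> \<not> fequiv \<phi> \<phi>'"
    using model_sat_noDelta_Sim_update unfolding fequiv_def by metis
qed

end
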